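(* Consider the Robertson-Walker Riemann-Cartan geometry in coordinates $(t,r,\theta,\phi)$ with coframe $\mathbf h^1=dt$, $\mathbf h^2=\frac{a(t)}{\sqrt{1-kr^2}}dr$, $\mathbf h^3=a(t)r\,d\theta$, $\mathbf h^4=a(t)r\sin\theta\,d\phi$ ($a>0$, $k\in\mathbb R$) and metric-compatible connection whose only non-zero components (up to $\omega_{abc}=-\omega_{bac}$) are $\omega_{122}=\omega_{133}=\omega_{144}=W_1(t)$, $\omega_{234}=-\omega_{243}=\omega_{342}=W_2(t)$, $\omega_{233}=\omega_{244}=-\frac{\sqrt{1-kr^2}}{a r}$, $\omega_{344}=-\frac{\cos\theta}{a r\sin\theta}$. Then the curvature of this connection vanishes (teleparallel RW geometry) if and only if $(W_1,W_2)$ is one of (1) $W_1=0,\ W_2=-\frac{\sqrt k}{a}$; (2) $W_1=0,\ W_2=\frac{\sqrt k}{a}$; (3) $W_1=-\frac{\sqrt{-k}}{a},\ W_2=0$; (4) $W_1=\frac{\sqrt{-k}}{a},\ W_2=0$, where real-valuedness requires $k\ge0$ in cases (1),(2) and $k\le0$ in cases (3),(4); for $k=0$ the four cases coincide.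
   Context: Frame indices in $\{1,2,3,4\}$, $\eta=\mathrm{diag}(-1,1,1,1)$, $\omega_{abc}=\eta_{ad}\omega^d{}_{bc}$, $\boldsymbol\omega^a{}_b=\omega^a{}_{bc}\mathbf h^c$, dual frame $\mathbf h_a=h_a{}^\mu\partial_\mu$. Curvature: $R^a{}_{bcd}=h_c{}^\mu\partial_\mu\omega^a{}_{bd}-h_d{}^\nu\partial_\nu\omega^a{}_{bc}+\omega^a{}_{fc}\omega^f{}_{bd}-\omega^a{}_{fd}\omega^f{}_{bc}$. *)

theory Defs
  imports "HOL-Analysis.Analysis"
begin

text \<open>Coordinates: a point is x :: nat => real with x 1 = t, x 2 = r, x 3 = theta, x 4 = phi.
  Frame and coordinate indices range over {1..4}.\<close>

type_synonym point = "nat \<Rightarrow> real"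

definition idx :: "nat set" where "idx = {1..4}"

definition eta :: "nat \<Rightarrow> real" where
  "eta i = (if i = 1 then -1 else 1)"

definition pd :: "nat \<Rightarrow> (point \<Rightarrow> real) \<Rightarrow> point \<Rightarrow> real" where
  "pd mu F x = deriv (\<lambda>s. F (x(mu := s))) (x mu)"

definition coframe :: "(real \<Rightarrow> real) \<Rightarrow> real \<Rightarrow> nat \<Rightarrow> nat \<Rightarrow> point \<Rightarrow> real" where
  "coframe a k i mu x =
     (if i \<noteq> mu then 0
      else if i = 1 then 1
      else if i = 2 then a (x 1) / sqrt (1 - k * (x 2)^2)
      else if i = 3 then a (x 1) * x 2
      else if i = 4 then a (x 1) * x 2 * sin (x 3)
      else 0)"

text \<open>Dual frame components h_a^mu (the inverse matrix of the coframe).\<close>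
definition frame :: "(real \<Rightarrow> real) \<Rightarrow> real \<Rightarrow> nat \<Rightarrow> nat \<Rightarrow> point \<Rightarrow> real" where
  "frame a k i mu x =
     (if i \<noteq> mu then 0
      else if i = 1 then 1
      else if i = 2 then sqrt (1 - k * (x 2)^2) / a (x 1)
      else if i = 3 then 1 / (a (x 1) * x 2)
      else if i = 4 then 1 / (a (x 1) * x 2 * sin (x 3))
      else 0)"

definition fder :: "(real \<Rightarrow> real) \<Rightarrow> real \<Rightarrow> nat \<Rightarrow> (point \<Rightarrow> real) \<Rightarrow> point \<Rightarrow> real" where
  "fder a k c F x = (\<Sum>mu\<in>idx. frame a k c mu x * pd mu F x)"

text \<open>Coefficients of anholonomy: [h_c, h_d] = C^f_{cd} h_f.\<close>
definition anhol :: "(real \<Rightarrow> real) \<Rightarrow> real \<Rightarrow> nat \<Rightarrow> nat \<Rightarrow> nat \<Rightarrow> point \<Rightarrow> real" where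
  "anhol a k f c d x =
     (\<Sum>mu\<in>idx. coframe a k f mu x *
        (fder a k c (frame a k d mu) x - fder a k d (frame a k c mu) x))"

text \<open>The listed connection components omega_{abc} (one representative of each pair
  related by omega_{abc} = - omega_{bac}).\<close>
definition omega_listed ::
  "(real \<Rightarrow> real) \<Rightarrow> real \<Rightarrow> (real \<Rightarrow> real) \<Rightarrow> (real \<Rightarrow> real) \<Rightarrow> nat \<Rightarrow> nat \<Rightarrow> nat \<Rightarrow> point \<Rightarrow> real" where
  "omega_listed a k W1 W2 i j l x =
     (let t = x 1; r = x 2; th = x 3 in
      if (i, j, l) = (1, 2, 2) \<or> (i, j, l) = (1, 3, 3) \<or> (i, j, l) = (1, 4, 4) then W1 t
      else if (i, j, l) = (2, 3, 4) \<or> (i, j, l) = (3, 4, 2) then W2 t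
      else if (i, j, l) = (2, 4, 3) then - W2 t
      else if (i, j, l) = (2, 3, 3) \<or> (i, j, l) = (2, 4, 4) then - sqrt (1 - k * r^2) / (a t * r)
      else if (i, j, l) = (3, 4, 4) then - cos th / (a t * r * sin th)
      else 0)"

definition omega_low ::
  "(real \<Rightarrow> real) \<Rightarrow> real \<Rightarrow> (real \<Rightarrow> real) \<Rightarrow> (real \<Rightarrow> real) \<Rightarrow> nat \<Rightarrow> nat \<Rightarrow> nat \<Rightarrow> point \<Rightarrow> real" where
  "omega_low a k W1 W2 i j l x = omega_listed a k W1 W2 i j l x - omega_listed a k W1 W2 j i l x"

text \<open>omega^a_{bc} = eta^{ad} omega_{dbc} (eta is diagonal and its own inverse).\<close>
definition omega_up ::
  "(real \<Rightarrow> real) \<Rightarrow> real \<Rightarrow> (real \<Rightarrow> real) \<Rightarrow> (real \<Rightarrow> real) \<Rightarrow> nat \<Rightarrow> nat \<Rightarrow> nat \<Rightarrow> point \<Rightarrow> real" where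
  "omega_up a k W1 W2 i j l x = eta i * omega_low a k W1 W2 i j l x"

definition curv ::
  "(real \<Rightarrow> real) \<Rightarrow> real \<Rightarrow> (real \<Rightarrow> real) \<Rightarrow> (real \<Rightarrow> real) \<Rightarrow> nat \<Rightarrow> nat \<Rightarrow> nat \<Rightarrow> nat \<Rightarrow> point \<Rightarrow> real" where
  "curv a k W1 W2 i j c d x =
     fder a k c (omega_up a k W1 W2 i j d) x - fder a k d (omega_up a k W1 W2 i j c) x
     + (\<Sum>f\<in>idx. omega_up a k W1 W2 i f c x * omega_up a k W1 W2 f j d x
                - omega_up a k W1 W2 i f d x * omega_up a k W1 W2 f j c x)
     - (\<Sum>f\<in>idx. anhol a k f c d x * omega_up a k W1 W2 i j f x)"

definition RW_domain :: "real \<Rightarrow> point set" where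
  "RW_domain k = {x. 0 < x 2 \<and> 1 - k * (x 2)^2 > 0 \<and> 0 < x 3 \<and> x 3 < pi}"

end

theory Submission
  imports Defs
begin

text \<open>Two curvature components already pin down the connection: \<open>R\<^sup>1\<^sub>2\<^sub>3\<^sub>4 = 2 W\<^sub>1 W\<^sub>2\<close>
  and \<open>R\<^sup>2\<^sub>3\<^sub>2\<^sub>3 = W\<^sub>1\<^sup>2 - W\<^sub>2\<^sup>2 + k/a\<^sup>2\<close>. Hence \<open>u = a W\<^sub>1\<close> and \<open>v = a W\<^sub>2\<close> satisfy
  \<open>u v = 0\<close> and \<open>v\<^sup>2 - u\<^sup>2 = k\<close>, so each takes only finitely many values; being
  continuous, both are constant, which yields the four cases. Conversely, if \<open>W\<^sub>i\<close> is a
  constant multiple of \<open>1/a\<close> then \<open>W\<^sub>i' = - W\<^sub>i a'/a\<close>, and together with the two algebraic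
  relations this makes every curvature component vanish.\<close>

lemma continuous_const_if_zero_or_square_eq:
  fixes u :: "real \<Rightarrow> real"
  assumes "continuous_on UNIV u" and "\<And>t. u t = 0 \<or> (u t)\<^sup>2 = c"
  shows "\<exists>p. \<forall>t. u t = p"
proof -
  have "u t \<in> {0, sqrt c, - sqrt c}" for t
  proof (cases "u t = 0")
    case False
    then have "sqrt c = \<bar>u t\<bar>" using assms(2)[of t] real_sqrt_abs by metis
    then show ?thesis by (cases "u t \<ge> 0") auto
  qed simp
  then have "finite (range u)"
    by (meson finite.emptyI finite_insert finite_subset image_subsetI)
  then obtain p where "\<forall>t\<in>UNIV. u t = p"
    using continuous_finite_range_constant[OF connected_UNIV assms(1)]
    unfolding constant_on_def by blast
  then show ?thesis by blast
qed

lemma RW_cases_iff_scaled_constants: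
  fixes a W1 W2 :: "real \<Rightarrow> real" and k :: real
  shows "((k \<ge> 0 \<and> (\<forall>t. W1 t = 0 \<and> W2 t = - sqrt k / a t))
        \<or> (k \<ge> 0 \<and> (\<forall>t. W1 t = 0 \<and> W2 t = sqrt k / a t))
        \<or> (k \<le> 0 \<and> (\<forall>t. W1 t = - sqrt (- k) / a t \<and> W2 t = 0))
        \<or> (k \<le> 0 \<and> (\<forall>t. W1 t = sqrt (- k) / a t \<and> W2 t = 0)))
     \<longleftrightarrow> (\<exists>p q. p * q = 0 \<and> k = q\<^sup>2 - p\<^sup>2 \<and> W1 = (\<lambda>t. p / a t) \<and> W2 = (\<lambda>t. q / a t))"
    (is "?cases \<longleftrightarrow> ?scaled")
proof
  assume ?cases
  then show ?scaled
  proof (elim disjE conjE)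
    assume "k \<ge> 0" "\<forall>t. W1 t = 0 \<and> W2 t = - sqrt k / a t"
    then show ?scaled by (intro exI[of _ 0] exI[of _ "- sqrt k"]) (auto simp: fun_eq_iff)
  next
    assume "k \<ge> 0" "\<forall>t. W1 t = 0 \<and> W2 t = sqrt k / a t"
    then show ?scaled by (intro exI[of _ 0] exI[of _ "sqrt k"]) (auto simp: fun_eq_iff)
  next
    assume "k \<le> 0" "\<forall>t. W1 t = - sqrt (- k) / a t \<and> W2 t = 0"
    then show ?scaled by (intro exI[of _ "- sqrt (- k)"] exI[of _ 0]) (auto simp: fun_eq_iff)
  next
    assume "k \<le> 0" "\<forall>t. W1 t = sqrt (- k) / a t \<and> W2 t = 0"
    then show ?scaled by (intro exI[of _ "sqrt (- k)"] exI[of _ 0]) (auto simp: fun_eq_iff)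
  qed
next
  assume ?scaled
  then obtain p q where pq: "p * q = 0" "k = q\<^sup>2 - p\<^sup>2"
    and W: "W1 = (\<lambda>t. p / a t)" "W2 = (\<lambda>t. q / a t)" by blast
  show ?cases
  proof (cases "p = 0")
    case True
    then have "k \<ge> 0" "q = sqrt k \<or> q = - sqrt k" using pq by (auto simp: abs_if)
    then show ?thesis using True W by auto
  next
    case False
    then have "k \<le> 0" "p = sqrt (- k) \<or> p = - sqrt (- k)" "q = 0" using pq by (auto simp: abs_if)
    then show ?thesis using W by auto
  qed
qed

lemma scaled_constants_if_pointwise:
  fixes a W1 W2 :: "real \<Rightarrow> real" and k :: real
  assumes a_nonzero: "\<And>t. a t \<noteq> 0"
    and "continuous_on UNIV (\<lambda>t. W1 t * a t)" "continuous_on UNIV (\<lambda>t. W2 t * a t)"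
    and pointwise: "\<And>t. W1 t * W2 t = 0 \<and> k = ((W2 t)\<^sup>2 - (W1 t)\<^sup>2) * (a t)\<^sup>2"
  shows "\<exists>p q. p * q = 0 \<and> k = q\<^sup>2 - p\<^sup>2 \<and> W1 = (\<lambda>t. p / a t) \<and> W2 = (\<lambda>t. q / a t)"
proof -
  have u_values: "W1 t * a t = 0 \<or> (W1 t * a t)\<^sup>2 = - k" for t
  proof (cases "W1 t = 0")
    case False
    then show ?thesis using pointwise[of t] by (simp add: power_mult_distrib)
  qed simp
  have v_values: "W2 t * a t = 0 \<or> (W2 t * a t)\<^sup>2 = k" for t
  proof (cases "W2 t = 0")
    case False
    then show ?thesis using pointwise[of t] by (simp add: power_mult_distrib)
  qed simp
  obtain p where "\<forall>t. W1 t * a t = p"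
    using continuous_const_if_zero_or_square_eq[OF assms(2) u_values] by blast
  moreover obtain q where "\<forall>t. W2 t * a t = q"
    using continuous_const_if_zero_or_square_eq[OF assms(3) v_values] by blast
  ultimately have W: "W1 = (\<lambda>t. p / a t)" "W2 = (\<lambda>t. q / a t)"
    using a_nonzero by (auto simp: fun_eq_iff eq_divide_eq)
  have "p * q = W1 0 * W2 0 * (a 0)\<^sup>2" "q\<^sup>2 - p\<^sup>2 = ((W2 0)\<^sup>2 - (W1 0)\<^sup>2) * (a 0)\<^sup>2"
    using a_nonzero[of 0] by (simp_all add: W power_divide field_simps power2_eq_square)
  then have "p * q = 0" "k = q\<^sup>2 - p\<^sup>2"
    using pointwise[of 0] by simp_all
  with W show ?thesis by blast
qed

lemma RW_domain_point_at: "\<exists>x\<in>RW_domain k. x 1 = t"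
proof -
  define r :: real where "r = 1 / sqrt (\<bar>k\<bar> + 1)"
  have "r\<^sup>2 = 1 / (\<bar>k\<bar> + 1)"
    unfolding r_def by (simp add: power_divide)
  then have "k * r\<^sup>2 = k / (\<bar>k\<bar> + 1)" by simp
  also have "\<dots> < 1" using abs_ge_self[of k] by (simp add: field_simps)
  finally have "1 - k * r\<^sup>2 > 0" by simp
  moreover have "r > 0" unfolding r_def by simp
  ultimately have "(\<lambda>i. if i = 1 then t else if i = 2 then r else pi / 2) \<in> RW_domain k"
    by (simp add: RW_domain_def)
  then show ?thesis by (intro bexI) simp_all
qed

lemma DERIV_const_divide:
  assumes "(f has_real_derivative D) (at t)" "f t \<noteq> 0"
  shows "((\<lambda>s. C / f s) has_real_derivative (- C * D / (f t)\<^sup>2)) (at t)"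
  using DERIV_divide[OF DERIV_const assms] by (simp add: power2_eq_square)

lemma deriv_const_divide:
  fixes f :: "real \<Rightarrow> real"
  assumes "f differentiable (at t)" "f t \<noteq> 0"
  shows "deriv (\<lambda>s. C / f s) t = - (C / f t) * deriv f t / f t"
  using DERIV_const_divide[OF iffD2[OF DERIV_deriv_iff_real_differentiable assms(1)] assms(2)]
    assms(2) by (simp add: DERIV_imp_deriv power2_eq_square)

lemma DERIV_cong_fun:
  "(f has_real_derivative D) F \<Longrightarrow> D = E \<Longrightarrow> (\<And>s. g s = f s) \<Longrightarrow> (g has_real_derivative E) F"
  by (metis ext)

lemma pd_eq_const: "(\<And>s. F (x(mu := s)) = F x) \<Longrightarrow> pd mu F x = 0"
  by (simp add: pd_def)

lemma pd_eqI: "((\<lambda>s. F (x(mu := s))) has_real_derivative D) (at (x mu)) \<Longrightarrow> pd mu F x = D"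
  unfolding pd_def by (rule DERIV_imp_deriv)

lemma idx_eq: "idx = {1, 2, 3, 4}"
  by (auto simp: idx_def)

lemma fder_eq: "c \<in> idx \<Longrightarrow> fder a k c F x = frame a k c c x * pd c F x"
  by (auto simp: fder_def idx_eq frame_def)

lemma anhol_eq:
  "f \<in> idx \<Longrightarrow> c \<in> idx \<Longrightarrow> d \<in> idx \<Longrightarrow> anhol a k f c d x =
     coframe a k f f x * (frame a k c c x * pd c (frame a k d f) x - frame a k d d x * pd d (frame a k c f) x)"
  unfolding anhol_def by (simp add: fder_eq) (auto simp: idx_eq coframe_def)

definition radial_term :: "(real \<Rightarrow> real) \<Rightarrow> real \<Rightarrow> point \<Rightarrow> real" where
  "radial_term a k y = sqrt (1 - k * (y 2)\<^sup>2) / (a (y 1) * y 2)"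

definition polar_term :: "(real \<Rightarrow> real) \<Rightarrow> point \<Rightarrow> real" where
  "polar_term a y = cos (y 3) / (a (y 1) * y 2 * sin (y 3))"

definition W1_table :: "nat \<Rightarrow> nat \<Rightarrow> nat \<Rightarrow> real" where
  "W1_table i j l = (if (i, j, l) = (1, 2, 2) \<or> (i, j, l) = (1, 3, 3) \<or> (i, j, l) = (1, 4, 4) then 1 else 0)"

definition W2_table :: "nat \<Rightarrow> nat \<Rightarrow> nat \<Rightarrow> real" where
  "W2_table i j l =
     (if (i, j, l) = (2, 3, 4) \<or> (i, j, l) = (3, 4, 2) then 1 else if (i, j, l) = (2, 4, 3) then -1 else 0)"

definition radial_table :: "nat \<Rightarrow> nat \<Rightarrow> nat \<Rightarrow> real" where
  "radial_table i j l = (if (i, j, l) = (2, 3, 3) \<or> (i, j, l) = (2, 4, 4) then -1 else 0)"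

definition polar_table :: "nat \<Rightarrow> nat \<Rightarrow> nat \<Rightarrow> real" where
  "polar_table i j l = (if (i, j, l) = (3, 4, 4) then -1 else 0)"

definition raise_antisym :: "(nat \<Rightarrow> nat \<Rightarrow> nat \<Rightarrow> real) \<Rightarrow> nat \<Rightarrow> nat \<Rightarrow> nat \<Rightarrow> real" where
  "raise_antisym T i j l = eta i * (T i j l - T j i l)"

lemma omega_up_eq:
  "omega_up a k W1 W2 i j l y =
     raise_antisym W1_table i j l * W1 (y 1) + raise_antisym W2_table i j l * W2 (y 1)
     + raise_antisym radial_table i j l * radial_term a k y + raise_antisym polar_table i j l * polar_term a y"
proof -
  have "omega_listed a k W1 W2 i j l y =
      W1_table i j l * W1 (y 1) + W2_table i j l * W2 (y 1)
      + radial_table i j l * radial_term a k y + polar_table i j l * polar_term a y" for i j l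
    unfolding omega_listed_def W1_table_def W2_table_def radial_table_def polar_table_def
      radial_term_def polar_term_def Let_def
    by auto
  then show ?thesis
    unfolding omega_up_def omega_low_def raise_antisym_def by (simp add: algebra_simps)
qed

context
  fixes a W1 W2 :: "real \<Rightarrow> real" and k :: real and x :: point
  assumes a_pos: "\<And>t. a t > 0"
    and a_diff: "\<And>t. a differentiable (at t)"
    and W1_diff: "\<And>t. W1 differentiable (at t)"
    and W2_diff: "\<And>t. W2 differentiable (at t)"
    and x_domain: "x \<in> RW_domain k"
begin

lemma DERIV_a: "(a has_real_derivative deriv a t) (at t)"
  using a_diff DERIV_deriv_iff_real_differentiable by blast

lemma DERIV_W1: "(W1 has_real_derivative deriv W1 t) (at t)"
  using W1_diff DERIV_deriv_iff_real_differentiable by blast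

lemma DERIV_W2: "(W2 has_real_derivative deriv W2 t) (at t)"
  using W2_diff DERIV_deriv_iff_real_differentiable by blast

lemma r_pos: "x 2 > 0"
  using x_domain by (simp add: RW_domain_def)

lemma metric_factor_pos: "1 - k * (x 2)\<^sup>2 > 0"
  using x_domain by (simp add: RW_domain_def)

lemma sin_theta_pos: "sin (x 3) > 0"
  using x_domain by (simp add: RW_domain_def sin_gt_zero)

lemma a_nonzero [simp]: "a t \<noteq> 0"
  using a_pos[of t] by simp

abbreviation "A \<equiv> a (x 1)"
abbreviation "A' \<equiv> deriv a (x 1)"
abbreviation "r \<equiv> x 2"
abbreviation "S \<equiv> sqrt (1 - k * (x 2)\<^sup>2)"
abbreviation "sn \<equiv> sin (x 3)"
abbreviation "cs \<equiv> cos (x 3)"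

lemma S_pos: "S > 0"
  using metric_factor_pos by simp

lemma DERIV_const_divide_a_mult:
  "c \<noteq> 0 \<Longrightarrow> ((\<lambda>s. C / (a s * c)) has_real_derivative (- C * A' / (A\<^sup>2 * c))) (at (x 1))"
  by (rule DERIV_cong_fun[OF DERIV_const_divide[OF DERIV_cmult_right[OF DERIV_a]]])
    (auto simp: power2_eq_square)

lemma DERIV_const_divide_a: "((\<lambda>s. C / a s) has_real_derivative (- C * A' / A\<^sup>2)) (at (x 1))"
  by (rule DERIV_cong_fun[OF DERIV_const_divide[OF DERIV_a]]) (auto simp: power2_eq_square)

lemma DERIV_metric_factor_r: "((\<lambda>s. sqrt (1 - k * s\<^sup>2)) has_real_derivative (- k * r / S)) (at r)"
proof -
  have "((\<lambda>s. 1 - k * s\<^sup>2) has_real_derivative (- (k * (2 * r)))) (at r)"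
    by (auto intro!: derivative_eq_intros)
  from DERIV_chain2[OF DERIV_real_sqrt[OF metric_factor_pos] this] show ?thesis
    by (rule DERIV_cong_fun) (auto simp: field_simps)
qed

lemma DERIV_radial_term_t:
  "((\<lambda>s. radial_term a k (x(1 := s))) has_real_derivative (- S * A' / (A\<^sup>2 * r))) (at (x 1))"
  using r_pos by (intro DERIV_cong_fun[OF DERIV_const_divide_a_mult[of r S]]) (auto simp: radial_term_def)

lemma DERIV_radial_term_r:
  "((\<lambda>s. radial_term a k (x(2 := s))) has_real_derivative (- 1 / (S * A * r\<^sup>2))) (at (x 2))"
proof -
  have "((\<lambda>s. sqrt (1 - k * s\<^sup>2) / (A * s)) has_real_derivative
      ((- k * r / S) * (A * r) - S * A) / ((A * r) * (A * r))) (at r)"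
    using r_pos by (intro DERIV_divide[OF DERIV_metric_factor_r DERIV_cmult_Id[of A]]) auto
  moreover have "((- k * r / S) * (A * r) - S * A) / ((A * r) * (A * r)) = - 1 / (S * A * r\<^sup>2)"
    using S_pos r_pos metric_factor_pos by (simp add: field_simps power2_eq_square)
  ultimately show ?thesis by (rule DERIV_cong_fun) (simp add: radial_term_def)
qed

lemma DERIV_polar_term_t:
  "((\<lambda>s. polar_term a (x(1 := s))) has_real_derivative (- cs * A' / (A\<^sup>2 * (r * sn)))) (at (x 1))"
  using r_pos sin_theta_pos
  by (intro DERIV_cong_fun[OF DERIV_const_divide_a_mult[of "r * sn" cs]]) (auto simp: polar_term_def mult.assoc)

lemma DERIV_polar_term_r:
  "((\<lambda>s. polar_term a (x(2 := s))) has_real_derivative (- cs / (A * r\<^sup>2 * sn))) (at (x 2))"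
proof -
  have "((\<lambda>s. cs / (A * sn * s)) has_real_derivative (- cs * (A * sn) / (A * sn * r)\<^sup>2)) (at r)"
    using r_pos sin_theta_pos by (intro DERIV_const_divide DERIV_cmult_Id[of "A * sn"]) auto
  moreover have "- cs * (A * sn) / (A * sn * r)\<^sup>2 = - cs / (A * r\<^sup>2 * sn)"
    using r_pos sin_theta_pos by (simp add: field_simps power2_eq_square)
  ultimately show ?thesis by (rule DERIV_cong_fun) (simp add: polar_term_def mult_ac)
qed

lemma DERIV_polar_term_theta:
  "((\<lambda>s. polar_term a (x(3 := s))) has_real_derivative (- 1 / (A * r * sn\<^sup>2))) (at (x 3))"
proof -
  have "((\<lambda>s. cos s / (A * r * sin s)) has_real_derivative
      ((- sn) * (A * r * sn) - cs * (A * r * cs)) / ((A * r * sn) * (A * r * sn))) (at (x 3))"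
    using r_pos sin_theta_pos by (intro DERIV_divide DERIV_cos DERIV_cmult DERIV_sin) auto
  moreover have "(- sn) * (A * r * sn) - cs * (A * r * cs) = - (A * r)"
    using sin_cos_squared_add3[of "x 3"] by algebra
  ultimately show ?thesis
    using r_pos sin_theta_pos
    by (elim DERIV_cong_fun) (simp_all add: polar_term_def power2_eq_square)
qed

lemma DERIV_frame22_t:
  "((\<lambda>s. frame a k 2 2 (x(1 := s))) has_real_derivative (- S * A' / A\<^sup>2)) (at (x 1))"
  by (rule DERIV_cong_fun[OF DERIV_const_divide_a[of S]]) (auto simp: frame_def)

lemma DERIV_frame22_r:
  "((\<lambda>s. frame a k 2 2 (x(2 := s))) has_real_derivative (- k * r / S / A)) (at (x 2))"
  by (rule DERIV_cong_fun[OF DERIV_cdivide[OF DERIV_metric_factor_r, of A]]) (auto simp: frame_def)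

lemma DERIV_frame33_t:
  "((\<lambda>s. frame a k 3 3 (x(1 := s))) has_real_derivative (- 1 * A' / (A\<^sup>2 * r))) (at (x 1))"
  using r_pos by (intro DERIV_cong_fun[OF DERIV_const_divide_a_mult[of r 1]]) (auto simp: frame_def)

lemma DERIV_frame33_r:
  "((\<lambda>s. frame a k 3 3 (x(2 := s))) has_real_derivative (- 1 * A / (A * r)\<^sup>2)) (at (x 2))"
  using r_pos
  by (intro DERIV_cong_fun[OF DERIV_const_divide[OF DERIV_cmult_Id[of A]]]) (auto simp: frame_def)

lemma DERIV_frame44_t:
  "((\<lambda>s. frame a k 4 4 (x(1 := s))) has_real_derivative (- 1 * A' / (A\<^sup>2 * (r * sn)))) (at (x 1))"
  using r_pos sin_theta_pos
  by (intro DERIV_cong_fun[OF DERIV_const_divide_a_mult[of "r * sn" 1]]) (auto simp: frame_def mult.assoc)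

lemma DERIV_frame44_r:
  "((\<lambda>s. frame a k 4 4 (x(2 := s))) has_real_derivative (- 1 * (A * sn) / (A * sn * r)\<^sup>2)) (at (x 2))"
  using r_pos sin_theta_pos
  by (intro DERIV_cong_fun[OF DERIV_const_divide[OF DERIV_cmult_Id[of "A * sn"]]])
    (auto simp: frame_def mult_ac)

lemma DERIV_frame44_theta:
  "((\<lambda>s. frame a k 4 4 (x(3 := s))) has_real_derivative (- 1 * (A * r * cs) / (A * r * sn)\<^sup>2)) (at (x 3))"
  using r_pos sin_theta_pos
  by (intro DERIV_cong_fun[OF DERIV_const_divide[OF DERIV_cmult[OF DERIV_sin, where c = "A * r"]]])
    (auto simp: frame_def)

lemma pd_omega_up:
  assumes "mu \<in> idx"
  shows "pd mu (omega_up a k W1 W2 i j l) x =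
     raise_antisym W1_table i j l * (if mu = 1 then deriv W1 (x 1) else 0)
   + raise_antisym W2_table i j l * (if mu = 1 then deriv W2 (x 1) else 0)
   + raise_antisym radial_table i j l *
       (if mu = 1 then - S * A' / (A\<^sup>2 * r) else if mu = 2 then - 1 / (S * A * r\<^sup>2) else 0)
   + raise_antisym polar_table i j l *
       (if mu = 1 then - cs * A' / (A\<^sup>2 * (r * sn)) else if mu = 2 then - cs / (A * r\<^sup>2 * sn)
        else if mu = 3 then - 1 / (A * r * sn\<^sup>2) else 0)"
proof -
  have W: "((\<lambda>s. W ((x(mu := s)) 1)) has_real_derivative (if mu = 1 then deriv W (x 1) else 0)) (at (x mu))"
    if "\<And>t. (W has_real_derivative deriv W t) (at t)" for W
    using that by (cases "mu = 1") auto
  have radial: "((\<lambda>s. radial_term a k (x(mu := s))) has_real_derivative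
      (if mu = 1 then - S * A' / (A\<^sup>2 * r) else if mu = 2 then - 1 / (S * A * r\<^sup>2) else 0)) (at (x mu))"
    using assms DERIV_radial_term_t DERIV_radial_term_r by (auto simp: idx_eq radial_term_def)
  have polar: "((\<lambda>s. polar_term a (x(mu := s))) has_real_derivative
      (if mu = 1 then - cs * A' / (A\<^sup>2 * (r * sn)) else if mu = 2 then - cs / (A * r\<^sup>2 * sn)
       else if mu = 3 then - 1 / (A * r * sn\<^sup>2) else 0)) (at (x mu))"
    using assms DERIV_polar_term_t DERIV_polar_term_r DERIV_polar_term_theta
    by (auto simp: idx_eq polar_term_def)
  show ?thesis
    unfolding omega_up_eq
    by (intro pd_eqI DERIV_add DERIV_cmult W DERIV_W1 DERIV_W2 radial polar)
qed

lemma pd_frame: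
  assumes mu: "mu \<in> idx"
  shows "pd mu (frame a k d f) x =
    (if d \<noteq> f then 0
     else if d = 2 then (if mu = 1 then - S * A' / A\<^sup>2 else if mu = 2 then - k * r / S / A else 0)
     else if d = 3 then (if mu = 1 then - 1 * A' / (A\<^sup>2 * r) else if mu = 2 then - 1 * A / (A * r)\<^sup>2 else 0)
     else if d = 4 then
       (if mu = 1 then - 1 * A' / (A\<^sup>2 * (r * sn))
        else if mu = 2 then - 1 * (A * sn) / (A * sn * r)\<^sup>2
        else if mu = 3 then - 1 * (A * r * cs) / (A * r * sn)\<^sup>2 else 0)
     else 0)"
proof (cases "d = f \<and> d \<in> {2, 3, 4}")
  case True
  note pd_frame_eqs = pd_eqI[OF DERIV_frame22_t] pd_eqI[OF DERIV_frame22_r] pd_eqI[OF DERIV_frame33_t]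
    pd_eqI[OF DERIV_frame33_r] pd_eqI[OF DERIV_frame44_t] pd_eqI[OF DERIV_frame44_r]
    pd_eqI[OF DERIV_frame44_theta]
  from True mu show ?thesis
    apply (simp add: idx_eq)
    apply (elim disjE)
    apply (simp_all only: pd_frame_eqs pd_frame_eqs[unfolded One_nat_def])
    apply (simp_all add: pd_eq_const frame_def)
    done
next
  case False
  then have "frame a k d f = (\<lambda>y. if d = f \<and> d = 1 then 1 else 0)"
    by (auto simp: frame_def fun_eq_iff)
  with False show ?thesis by (simp add: pd_def)
qed

lemmas curv_unfold = curv_def fder_eq pd_omega_up anhol_eq pd_frame idx_eq omega_up_eq
  raise_antisym_def W1_table_def W2_table_def radial_table_def polar_table_def eta_def
  frame_def coframe_def radial_term_def polar_term_def

lemma curv_1234_eq: "curv a k W1 W2 1 2 3 4 x = 2 * (W1 (x 1) * W2 (x 1))"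
  by (simp add: curv_unfold)

lemma curv_2323_eq: "curv a k W1 W2 2 3 2 3 x = (W1 (x 1))\<^sup>2 - (W2 (x 1))\<^sup>2 + k / A\<^sup>2"
  using r_pos metric_factor_pos
  by (simp add: curv_unfold) (simp add: field_simps power2_eq_square)

lemma curv_eq_0:
  assumes "deriv W1 (x 1) = - W1 (x 1) * A' / A"
    and "deriv W2 (x 1) = - W2 (x 1) * A' / A"
    and W12: "W1 (x 1) = 0 \<or> W2 (x 1) = 0"
    and k_eq: "k = ((W2 (x 1))\<^sup>2 - (W1 (x 1))\<^sup>2) * A\<^sup>2"
  shows "\<forall>i\<in>idx. \<forall>j\<in>idx. \<forall>c\<in>idx. \<forall>d\<in>idx. curv a k W1 W2 i j c d x = 0"
proof -
  note deriv_W = assms(1,2) assms(1,2)[unfolded One_nat_def]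
  have S_sq: "S * S = 1 - k * r\<^sup>2" using metric_factor_pos by simp
  have sin_cos: "sn * sn + cs * cs = 1"
    using sin_cos_squared_add3[of "x 3"] by (simp add: add.commute)
  show ?thesis
    using r_pos sin_theta_pos metric_factor_pos W12
    apply (simp only: idx_eq Set.ball_simps)
    apply (intro conjI)
    apply (simp_all add: curv_unfold deriv_W)
    apply (simp_all add: field_simps power2_eq_square)
    apply (use S_sq k_eq sin_cos in \<open>(auto simp: field_simps power2_eq_square; algebra)\<close>)+
    done
qed
end

definition teleparallel :: "(real \<Rightarrow> real) \<Rightarrow> real \<Rightarrow> (real \<Rightarrow> real) \<Rightarrow> (real \<Rightarrow> real) \<Rightarrow> bool" where
  "teleparallel a k W1 W2 \<longleftrightarrow>
     (\<forall>x\<in>RW_domain k. \<forall>i\<in>idx. \<forall>j\<in>idx. \<forall>c\<in>idx. \<forall>d\<in>idx. curv a k W1 W2 i j c d x = 0)"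

lemma teleparallel_imp_pointwise:
  assumes "\<And>t. a t > 0" "\<And>t. a differentiable (at t)"
    and "\<And>t. W1 differentiable (at t)" "\<And>t. W2 differentiable (at t)"
    and "teleparallel a k W1 W2"
  shows "W1 t * W2 t = 0 \<and> k = ((W2 t)\<^sup>2 - (W1 t)\<^sup>2) * (a t)\<^sup>2"
proof -
  obtain x where x: "x \<in> RW_domain k" "x 1 = t"
    using RW_domain_point_at by blast
  have "(1::nat) \<in> idx" "(2::nat) \<in> idx" "(3::nat) \<in> idx" "(4::nat) \<in> idx"
    by (simp_all add: idx_eq)
  then have "curv a k W1 W2 1 2 3 4 x = 0" "curv a k W1 W2 2 3 2 3 x = 0"
    using assms(5) x(1) unfolding teleparallel_def by blast+
  then have "W1 t * W2 t = 0" "(W1 t)\<^sup>2 - (W2 t)\<^sup>2 + k / (a t)\<^sup>2 = 0"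
    using curv_1234_eq[OF assms(1-4) x(1)] curv_2323_eq[OF assms(1-4) x(1)] x(2) by simp_all
  then show ?thesis
    using assms(1)[of t] by (simp add: field_simps)
qed

lemma teleparallel_if_scaled_constants:
  assumes a_pos: "\<And>t. a t > 0" and a_diff: "\<And>t. a differentiable (at t)"
    and "p * q = 0" "k = q\<^sup>2 - p\<^sup>2"
  shows "teleparallel a k (\<lambda>t. p / a t) (\<lambda>t. q / a t)"
  unfolding teleparallel_def
proof
  fix x assume x: "x \<in> RW_domain k"
  have a_nonzero: "a t \<noteq> 0" for t
    using a_pos[of t] by simp
  have diff: "(\<lambda>t. C / a t) differentiable (at t)" for C t
    using a_diff a_nonzero by (auto intro!: derivative_intros)
  show "\<forall>i\<in>idx. \<forall>j\<in>idx. \<forall>c\<in>idx. \<forall>d\<in>idx. curv a k (\<lambda>t. p / a t) (\<lambda>t. q / a t) i j c d x = 0"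
  proof (rule curv_eq_0[OF a_pos a_diff diff diff x])
    show "p / a (x 1) = 0 \<or> q / a (x 1) = 0"
      "k = ((q / a (x 1))\<^sup>2 - (p / a (x 1))\<^sup>2) * (a (x 1))\<^sup>2"
      using assms(3,4) a_nonzero[of "x 1"] by (simp_all add: power_divide diff_divide_distrib[symmetric])
    show "deriv (\<lambda>t. p / a t) (x 1) = - (p / a (x 1)) * deriv a (x 1) / a (x 1)"
      "deriv (\<lambda>t. q / a t) (x 1) = - (q / a (x 1)) * deriv a (x 1) / a (x 1)"
      by (rule deriv_const_divide[OF a_diff a_nonzero])+
  qed
qed

theorem mainTheorem9:
  fixes a W1 W2 :: "real \<Rightarrow> real" and k :: real
  assumes a_pos: "\<And>t. a t > 0"
    and a_diff: "\<And>t. a differentiable (at t)"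
    and W1_diff: "\<And>t. W1 differentiable (at t)"
    and W2_diff: "\<And>t. W2 differentiable (at t)"
  shows "(\<forall>x\<in>RW_domain k. \<forall>i\<in>idx. \<forall>j\<in>idx. \<forall>c\<in>idx. \<forall>d\<in>idx.
            curv a k W1 W2 i j c d x = 0)
     \<longleftrightarrow> ((k \<ge> 0 \<and> (\<forall>t. W1 t = 0 \<and> W2 t = - sqrt k / a t))
        \<or> (k \<ge> 0 \<and> (\<forall>t. W1 t = 0 \<and> W2 t = sqrt k / a t))
        \<or> (k \<le> 0 \<and> (\<forall>t. W1 t = - sqrt (- k) / a t \<and> W2 t = 0))
        \<or> (k \<le> 0 \<and> (\<forall>t. W1 t = sqrt (- k) / a t \<and> W2 t = 0)))"
proof -
  have a_nonzero: "a t \<noteq> 0" for t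
    using a_pos[of t] by simp
  have continuous: "continuous_on UNIV (\<lambda>t. W1 t * a t)" "continuous_on UNIV (\<lambda>t. W2 t * a t)"
    using a_diff W1_diff W2_diff
    by (auto intro!: continuous_on_mult continuous_at_imp_continuous_on differentiable_imp_continuous_within)
  have "teleparallel a k W1 W2 \<longleftrightarrow>
      (\<exists>p q. p * q = 0 \<and> k = q\<^sup>2 - p\<^sup>2 \<and> W1 = (\<lambda>t. p / a t) \<and> W2 = (\<lambda>t. q / a t))"
  proof
    assume "teleparallel a k W1 W2"
    from scaled_constants_if_pointwise[OF a_nonzero continuous teleparallel_imp_pointwise[OF assms this]]
    show "\<exists>p q. p * q = 0 \<and> k = q\<^sup>2 - p\<^sup>2 \<and> W1 = (\<lambda>t. p / a t) \<and> W2 = (\<lambda>t. q / a t)" .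
  qed (use teleparallel_if_scaled_constants[OF a_pos a_diff] in blast)
  then show ?thesis
    by (simp only: teleparallel_def RW_cases_iff_scaled_constants)
qed

end
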